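(* Let $A,B\subseteq R_n$ be such that $\{j:\alpha^j\in A\}$ and $\{j:\alpha^j\in B\}$ are unions of $q$-cyclotomic cosets modulo $n$, and let $C_A$, $C_B$ be the cyclic codes of length $n$ over $\mathbb{F}_q$ with complete defining sets $A$, $B$ respectively. Let $d_A^{\perp}$ be the minimum distance of the dual of $C_A$ and $d_B$ the minimum distance of $C_B$, and suppose $d_A^{\perp}>d_B$. Then $\{j:\alpha^j\in AB\}$ is a union of $q$-cyclotomic cosets modulo $n$, and the cyclic code $C_{AB}$ of length $n$ over $\mathbb{F}_q$ with complete defining set $AB$ has $(d_A^{\perp}-d_B+1,\,d_B)$-locality.
   Context: Let $q$ be a prime power and $n$ a positive integer with $\gcd(n,q)=1$. Let $d$ be the multiplicative order of $q$ modulo $n$, $\alpha\in\mathbb{F}_{q^d}$ a primitive $n$-th root of unity, and $R_n=\{\alpha^j:0\le j\le n-1\}$. For $A,B\subseteq R_n$, $AB=\{\beta\gamma:\beta\in A,\gamma\in B\}$. If $Z\subseteq R_n$ is such that $\{j:\alpha^j\in Z\}$ is a union of $q$-cyclotomic cosets modulo $n$, the cyclic code of length $n$ over $\mathbb{F}_q$ with complete defining set $Z$ is the ideal generated by $\prod_{\beta\in Z}(x-\beta)\in\mathbb{F}_q[x]$ in $\mathbb{F}_q[x]/(x^n-1)$, identified with a subspace of $\mathbb{F}_q^n$ via coefficient vectors. Locality: for a linear code $C\subseteq\mathbb{F}^n$ and integers $r\ge1$, $\delta\ge2$, the $i$-th coordinate has $(r,\delta)$-locality if there is $S_i\subseteq\{1,\dots,n\}$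 with $i\in S_i$, $|S_i|\le r+\delta-1$ such that the punctured code $C|_{S_i}$ (restrictions of codewords to $S_i$) has minimum distance at least $\delta$ (the zero code having infinite minimum distance); $C$ has $(r,\delta)$-locality if every coordinate does. *)

theory Defs
  imports "HOL-Number_Theory.Number_Theory" "HOL-Computational_Algebra.Polynomial"
    "HOL-Library.Extended_Nat"
begin

definition field_embedding :: "('f::field \<Rightarrow> 'e::field) \<Rightarrow> bool" where
  "field_embedding emb \<longleftrightarrow> emb 1 = 1 \<and> (\<forall>x y. emb (x + y) = emb x + emb y)
      \<and> (\<forall>x y. emb (x * y) = emb x * emb y)"

definition roots_set :: "'e::field \<Rightarrow> nat \<Rightarrow> 'e set" where
  "roots_set \<alpha> n = {\<alpha> ^ j | j. j < n}"

definition exps :: "'e::field \<Rightarrow> nat \<Rightarrow> 'e set \<Rightarrow> nat set" where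
  "exps \<alpha> n Z = {j. j < n \<and> \<alpha> ^ j \<in> Z}"

text \<open>A subset of {0..n-1} is a union of q-cyclotomic cosets mod n iff closed under j -> q j mod n.\<close>
definition cyclotomic_union :: "nat \<Rightarrow> nat \<Rightarrow> nat set \<Rightarrow> bool" where
  "cyclotomic_union q n J \<longleftrightarrow> J \<subseteq> {..<n} \<and> (\<forall>j\<in>J. (q * j) mod n \<in> J)"

definition set_prod :: "'e::field set \<Rightarrow> 'e set \<Rightarrow> 'e set" where
  "set_prod A B = {\<beta> * \<gamma> | \<beta> \<gamma>. \<beta> \<in> A \<and> \<gamma> \<in> B}"

text \<open>Vectors in F^n are functions nat => F vanishing outside {0..<n}; coordinate i corresponds
  to the coefficient of x^i.\<close>
definition vecs :: "nat \<Rightarrow> (nat \<Rightarrow> 'f::zero) set" where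
  "vecs n = {v. \<forall>i\<ge>n. v i = 0}"

definition vec_poly :: "nat \<Rightarrow> (nat \<Rightarrow> 'f::comm_ring_1) \<Rightarrow> 'f poly" where
  "vec_poly n v = (\<Sum>i<n. monom (v i) i)"

text \<open>The cyclic code of length n over F_q with complete defining set Z: the ideal generated by
  g = prod_{beta in Z} (x - beta) (a polynomial over F_q, i.e. g = map_poly emb g') in
  F_q[x]/(x^n - 1), each residue class represented by its unique representative of degree < n.\<close>
definition cyclic_code :: "('f::field \<Rightarrow> 'e::field) \<Rightarrow> nat \<Rightarrow> 'e set \<Rightarrow> (nat \<Rightarrow> 'f) set" where
  "cyclic_code emb n Z = {v \<in> vecs n. \<exists>g' h. map_poly emb g' = (\<Prod>\<beta>\<in>Z. [:-\<beta>, 1:])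
      \<and> vec_poly n v = (h * g') mod (monom 1 n - 1)}"

definition dual_code :: "nat \<Rightarrow> (nat \<Rightarrow> 'f::field) set \<Rightarrow> (nat \<Rightarrow> 'f) set" where
  "dual_code n C = {u \<in> vecs n. \<forall>c\<in>C. (\<Sum>i<n. u i * c i) = 0}"

definition hamming :: "nat \<Rightarrow> (nat \<Rightarrow> 'f) \<Rightarrow> (nat \<Rightarrow> 'f) \<Rightarrow> nat" where
  "hamming n x y = card {i. i < n \<and> x i \<noteq> y i}"

text \<open>Minimum distance; the infimum over the empty set is infinity (zero code).\<close>
definition min_dist :: "nat \<Rightarrow> (nat \<Rightarrow> 'f) set \<Rightarrow> enat" where
  "min_dist n C = (INF x\<in>C. INF y\<in>C - {x}. enat (hamming n x y))"

text \<open>Punctured code C|_S: coordinates outside S are zeroed out, so distances count only S.\<close>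
definition puncture :: "(nat \<Rightarrow> 'f::zero) set \<Rightarrow> nat set \<Rightarrow> (nat \<Rightarrow> 'f) set" where
  "puncture C S = (\<lambda>v i. if i \<in> S then v i else 0) ` C"

definition has_locality :: "nat \<Rightarrow> (nat \<Rightarrow> 'f::zero) set \<Rightarrow> nat \<Rightarrow> nat \<Rightarrow> bool" where
  "has_locality n C r \<delta> \<longleftrightarrow> (\<forall>i<n. \<exists>S. S \<subseteq> {..<n} \<and> i \<in> S \<and> card S \<le> r + \<delta> - 1
      \<and> min_dist n (puncture C S) \<ge> enat \<delta>)"

end

theory Submission
  imports Defs "Jordan_Normal_Form.Char_Poly"
begin

text \<open>
  Read a word c as a polynomial and evaluate it at the n-th roots of unity. Since n is invertible,
  this transform is injective, and the transform of a componentwise product x * c is the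
  convolution of the transforms. A word x orthogonal to C_A vanishes at
  \<beta>^-1 for every root \<beta> outside A; for such x and any c in C_AB each term of
  the convolution at a point of B vanishes, so x * c lies in C_B. Taking for x a dual word of
  weight d_A and for S its support, two codewords of C_AB that differ on S yield a nonzero word of
  C_B supported in S, so the puncturing of C_AB to S has distance at least d_B. Cyclic shifts of x
  move S over every coordinate.
\<close>

lemma field_embedding_imp_field_hom:
  assumes "field_embedding emb"
  shows "field_hom emb"
proof
  have "emb (0 + 0) = emb 0 + emb 0"
    using assms unfolding field_embedding_def by blast
  then show "emb 0 = 0" by (metis add_cancel_right_right)
qed (use assms in \<open>auto simp: field_embedding_def\<close>)

section \<open>Weights, distances and puncturing\<close>

definition word_support :: "nat \<Rightarrow> (nat \<Rightarrow> 'a::zero) \<Rightarrow> nat set" where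
  "word_support n v = {i \<in> {..<n}. v i \<noteq> 0}"

lemma card_word_support: "card (word_support n v) = (\<Sum>i<n. if v i \<noteq> 0 then 1 else 0)"
  unfolding word_support_def by (simp add: sum.inter_filter [symmetric])

lemma hamming_eq_card_word_support:
  fixes x y :: "nat \<Rightarrow> 'a::ab_group_add"
  shows "hamming n x y = card (word_support n (\<lambda>i. x i - y i))"
  unfolding hamming_def word_support_def by simp

lemma min_dist_le: "x \<in> C \<Longrightarrow> y \<in> C \<Longrightarrow> x \<noteq> y \<Longrightarrow> min_dist n C \<le> enat (hamming n x y)"
  unfolding min_dist_def by (rule INF_lower2[of x]) (auto intro: INF_lower)

lemma min_dist_geI:
  "(\<And>x y. x \<in> C \<Longrightarrow> y \<in> C \<Longrightarrow> x \<noteq> y \<Longrightarrow> d \<le> hamming n x y) \<Longrightarrow> enat d \<le> min_dist n C"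
  unfolding min_dist_def by (intro INF_greatest) auto

lemma min_dist_attained:
  assumes "min_dist n C = enat d"
  obtains x y where "x \<in> C" "y \<in> C" "x \<noteq> y" "hamming n x y = d"
proof -
  have "\<exists>x\<in>C. \<exists>y\<in>C. x \<noteq> y \<and> hamming n x y = d"
  proof (rule ccontr)
    assume "\<not> ?thesis"
    then have "Suc d \<le> hamming n x y" if "x \<in> C" "y \<in> C" "x \<noteq> y" for x y
      using min_dist_le[OF that, of n] assms that by force
    then have "enat (Suc d) \<le> min_dist n C" by (rule min_dist_geI)
    with assms show False by simp
  qed
  with that show thesis by blast
qed

lemma min_dist_empty: "min_dist n {} = \<infinity>"
  unfolding min_dist_def by (simp add: top_enat_def)

lemma one_le_min_dist:
  assumes "C \<subseteq> vecs n"
  shows "1 \<le> min_dist n C"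
proof -
  have "1 \<le> hamming n x y" if "x \<in> C" "y \<in> C" "x \<noteq> y" for x y
  proof -
    obtain i where "x i \<noteq> y i" using \<open>x \<noteq> y\<close> by blast
    moreover have "i < n"
    proof (rule ccontr)
      assume "\<not> i < n"
      then have "x i = 0" "y i = 0" using that assms unfolding vecs_def by auto
      with \<open>x i \<noteq> y i\<close> show False by simp
    qed
    ultimately have "{i. i < n \<and> x i \<noteq> y i} \<noteq> {}" by blast
    then show ?thesis unfolding hamming_def by (simp add: Suc_leI card_gt_0_iff)
  qed
  then show ?thesis using min_dist_geI[of C 1 n] by (simp add: one_enat_def)
qed

lemma min_dist_vecs:
  assumes "0 < n"
  shows "min_dist n (vecs n :: (nat \<Rightarrow> 'a::zero_neq_one) set) = 1"
proof (rule antisym)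
  let ?e = "\<lambda>j. if j = 0 then 1 else 0 :: 'a"
  have "{i. i < n \<and> 0 \<noteq> ?e i} = {0}" using assms by auto
  then have "hamming n (\<lambda>_. 0) ?e = 1" unfolding hamming_def by simp
  moreover have "min_dist n (vecs n :: (nat \<Rightarrow> 'a) set) \<le> enat (hamming n (\<lambda>_. 0) ?e)"
  proof (rule min_dist_le)
    show "(\<lambda>_. 0) \<in> vecs n" "?e \<in> vecs n" using assms unfolding vecs_def by auto
    show "(\<lambda>_. 0) \<noteq> ?e" using fun_cong[of "\<lambda>_. 0" ?e 0] by auto
  qed
  ultimately show "min_dist n (vecs n :: (nat \<Rightarrow> 'a) set) \<le> 1"
    by (simp add: one_enat_def)
qed (rule one_le_min_dist, simp)

lemma min_dist_puncture_word_support: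
  fixes x :: "nat \<Rightarrow> 'a::idom"
  assumes diff_mem: "\<And>c c'. c \<in> C \<Longrightarrow> c' \<in> C \<Longrightarrow> (\<lambda>i. x i * (c i - c' i)) \<in> D"
    and zero_mem: "(\<lambda>_. 0) \<in> D"
    and dist: "enat d \<le> min_dist n D"
  shows "enat d \<le> min_dist n (puncture C (word_support n x))"
proof (rule min_dist_geI)
  fix u u' assume "u \<in> puncture C (word_support n x)" "u' \<in> puncture C (word_support n x)" "u \<noteq> u'"
  then obtain c c' where cc': "c \<in> C" "c' \<in> C"
    and u: "u = (\<lambda>i. if i \<in> word_support n x then c i else 0)"
    and u': "u' = (\<lambda>i. if i \<in> word_support n x then c' i else 0)"
    unfolding puncture_def by blast
  define z where "z i = x i * (c i - c' i)" for i
  have z_diff: "{i. i < n \<and> z i \<noteq> 0} = {i. i < n \<and> u i \<noteq> u' i}"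
    unfolding z_def u u' word_support_def by auto
  have "z \<noteq> (\<lambda>_. 0)"
  proof
    assume "z = (\<lambda>_. 0)"
    moreover obtain j where "u j \<noteq> u' j" using \<open>u \<noteq> u'\<close> by blast
    moreover then have "j < n" unfolding u u' word_support_def by (auto split: if_splits)
    ultimately show False using z_diff by blast
  qed
  moreover have "z \<in> D" unfolding z_def using diff_mem[OF cc'] .
  ultimately have "min_dist n D \<le> enat (hamming n z (\<lambda>_. 0))"
    using zero_mem by (intro min_dist_le)
  also have "hamming n z (\<lambda>_. 0) = hamming n u u'"
    unfolding hamming_def using z_diff by simp
  finally have "min_dist n D \<le> enat (hamming n u u')" .
  from order_trans[OF dist this] show "d \<le> hamming n u u'" by simp
qed

lemma power_mod_eq:
  fixes z :: "'a::monoid_mult"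
  assumes "z ^ n = 1"
  shows "z ^ (m mod n) = z ^ m"
proof -
  have "z ^ m = z ^ (n * (m div n) + m mod n)" by simp
  also have "\<dots> = (z ^ n) ^ (m div n) * z ^ (m mod n)" by (simp only: power_add power_mult)
  finally show ?thesis using assms by simp
qed

definition rotate_word :: "nat \<Rightarrow> nat \<Rightarrow> (nat \<Rightarrow> 'a::zero) \<Rightarrow> nat \<Rightarrow> 'a" where
  "rotate_word n s w j = (if j < n then w ((j + s) mod n) else 0)"

lemma bij_betw_add_mod:
  fixes s n :: nat
  assumes "s < n"
  shows "bij_betw (\<lambda>j. (j + s) mod n) {..<n} {..<n}"
proof (rule bij_betw_byWitness[where f' = "\<lambda>i. (i + (n - s)) mod n"])
  have "(j + s + (n - s)) mod n = j" "(j + (n - s) + s) mod n = j" if "j < n" for j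
    using assms that by simp_all
  then show "\<forall>j\<in>{..<n}. ((j + s) mod n + (n - s)) mod n = j"
    and "\<forall>i\<in>{..<n}. ((i + (n - s)) mod n + s) mod n = i"
    by (simp_all add: mod_add_left_eq)
qed (use assms in auto)

lemma card_word_support_rotate_word:
  assumes "s < n"
  shows "card (word_support n (rotate_word n s w)) = card (word_support n w)"
  unfolding card_word_support rotate_word_def
  using sum.reindex_bij_betw[OF bij_betw_add_mod[OF assms], of "\<lambda>i. if w i \<noteq> 0 then 1 else 0"]
  by simp

section \<open>Polynomials modulo x^n - 1\<close>

lemma degree_monom_minus_one:
  assumes "0 < n"
  shows "degree (monom 1 n - 1 :: 'a::field poly) = n"
proof -
  have "degree (monom 1 n + - 1 :: 'a poly) = degree (monom 1 n :: 'a poly)"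
    using assms by (intro degree_add_eq_left) (simp add: degree_monom_eq)
  then show ?thesis by (simp add: degree_monom_eq)
qed

lemma degree_vec_poly_less: "0 < n \<Longrightarrow> degree (vec_poly n v) < n"
  unfolding vec_poly_def
  by (rule degree_sum_less) (auto intro: le_less_trans[OF degree_monom_le])

lemma vec_poly_coeff:
  assumes "degree p < n"
  shows "vec_poly n (coeff p) = p"
proof -
  have "coeff (vec_poly n (coeff p)) k = coeff p k" for k
  proof -
    have "coeff (vec_poly n (coeff p)) k = (\<Sum>i<n. if i = k then coeff p i else 0)"
      unfolding vec_poly_def coeff_sum coeff_monom by (intro sum.cong) auto
    also have "\<dots> = coeff p k" using assms by (auto simp: coeff_eq_0)
    finally show ?thesis .
  qed
  then show ?thesis by (simp add: poly_eq_iff)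
qed

lemma degree_mod_monom_minus_one:
  assumes "0 < n"
  shows "degree (p mod (monom 1 n - 1 :: 'a::field poly)) < n"
proof -
  have "monom 1 n - 1 \<noteq> (0 :: 'a poly)"
    using degree_monom_minus_one[OF assms, where 'a='a] assms by auto
  with degree_mod_less[of "monom 1 n - 1" p] degree_monom_minus_one[OF assms, where 'a='a] assms
  show ?thesis by (cases "p mod (monom 1 n - 1) = 0") auto
qed

lemma prod_linear_factors_dvd:
  fixes p :: "'a::idom poly"
  assumes "finite B" "\<forall>\<beta>\<in>B. poly p \<beta> = 0"
  shows "(\<Prod>\<beta>\<in>B. [:-\<beta>, 1:]) dvd p"
  using assms
proof (induction B arbitrary: p rule: finite_induct)
  case empty
  then show ?case by simp
next
  case (insert b B p)
  then obtain r where r: "p = (\<Prod>\<beta>\<in>B. [:-\<beta>, 1:]) * r" by (meson dvd_def insertCI)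
  have "poly (\<Prod>\<beta>\<in>B. [:-\<beta>, 1:]) b \<noteq> 0"
    using insert(1,2) by (auto simp: poly_prod)
  moreover have "poly p b = 0" using insert by auto
  ultimately have "[:-b, 1:] dvd r" using r by (simp add: poly_eq_0_iff_dvd)
  then have "[:-b, 1:] * (\<Prod>\<beta>\<in>B. [:-\<beta>, 1:]) dvd r * (\<Prod>\<beta>\<in>B. [:-\<beta>, 1:])"
    by (rule mult_dvd_mono) simp
  then show ?case using r insert(1,2) by (simp add: mult.commute)
qed

lemma finite_roots_set: "finite (roots_set \<alpha> n)"
  unfolding roots_set_def by simp

section \<open>The Fourier transform at a primitive root of unity\<close>

locale primitive_root =
  fixes \<alpha> :: "'a::field" and n :: nat
  assumes root: "\<alpha> ^ n = 1"
    and primitive: "\<And>k. 0 < k \<Longrightarrow> k < n \<Longrightarrow> \<alpha> ^ k \<noteq> 1"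
    and n_nonzero: "of_nat n \<noteq> (0 :: 'a)"
begin

lemma n_pos: "0 < n"
  using n_nonzero by (cases n) auto

lemma alpha_nonzero: "\<alpha> \<noteq> 0"
  using root n_pos by (cases n) auto

lemma inj_on_power: "inj_on ((^) \<alpha>) {..<n}"
proof -
  have False if "\<alpha> ^ a = \<alpha> ^ b" "a < b" "b < n" for a b
  proof -
    have "\<alpha> ^ b = \<alpha> ^ a * \<alpha> ^ (b - a)" using \<open>a < b\<close> by (simp flip: power_add)
    then have "\<alpha> ^ (b - a) = 1" using \<open>\<alpha> ^ a = \<alpha> ^ b\<close> alpha_nonzero by simp
    moreover have "0 < b - a" "b - a < n" using that by auto
    ultimately show False using primitive by blast
  qed
  then show ?thesis
    by (intro inj_onI) (metis lessThan_iff linorder_neqE_nat)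
qed

lemma root_power: "(\<alpha> ^ j) ^ n = 1"
proof -
  have "(\<alpha> ^ j) ^ n = (\<alpha> ^ n) ^ j" by (simp flip: power_mult add: mult.commute)
  then show ?thesis by (simp add: root)
qed

lemma roots_set_eq: "roots_set \<alpha> n = {\<beta>. \<beta> ^ n = 1}"
proof (rule card_seteq)
  let ?p = "monom 1 n - 1 :: 'a poly"
  have roots: "{\<beta>. \<beta> ^ n = 1} = {\<beta>. poly ?p \<beta> = 0}"
    by (simp add: poly_monom)
  have "?p \<noteq> 0"
  proof
    assume "?p = 0"
    with degree_monom_minus_one[OF n_pos, where 'a='a] n_pos show False by simp
  qed
  then show "finite {\<beta>::'a. \<beta> ^ n = 1}" unfolding roots by (rule poly_roots_finite)
  show "roots_set \<alpha> n \<subseteq> {\<beta>. \<beta> ^ n = 1}"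
    unfolding roots_set_def by (auto simp: root_power)
  have "roots_set \<alpha> n = (^) \<alpha> ` {..<n}" unfolding roots_set_def by auto
  then have "card (roots_set \<alpha> n) = n" using card_image[OF inj_on_power] by simp
  moreover have "card {\<beta>::'a. \<beta> ^ n = 1} \<le> n"
    using card_poly_roots_bound[OF \<open>?p \<noteq> 0\<close>] degree_monom_minus_one[OF n_pos, where 'a='a]
    unfolding roots by linarith
  ultimately show "card {\<beta>::'a. \<beta> ^ n = 1} \<le> card (roots_set \<alpha> n)" by simp
qed

lemma set_prod_roots_set:
  assumes "A \<subseteq> roots_set \<alpha> n" "B \<subseteq> roots_set \<alpha> n"
  shows "set_prod A B \<subseteq> roots_set \<alpha> n"
  using assms unfolding set_prod_def roots_set_eq by (auto simp: power_mult_distrib subset_iff)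

lemma sum_power_orthogonal:
  assumes "i < n" "j < n"
  shows "(\<Sum>k<n. (\<alpha> ^ k) ^ i * (inverse \<alpha> ^ k) ^ j) = (if i = j then of_nat n else 0)"
proof -
  define z where "z = \<alpha> ^ i * inverse \<alpha> ^ j"
  have terms: "(\<alpha> ^ k) ^ i * (inverse \<alpha> ^ k) ^ j = z ^ k" for k
    unfolding z_def by (simp add: power_mult_distrib flip: power_mult) (simp add: mult.commute)
  show ?thesis
  proof (cases "i = j")
    case True
    then have "z = 1" unfolding z_def using alpha_nonzero by (simp add: power_inverse)
    with True show ?thesis unfolding terms by simp
  next
    case False
    have "z ^ n = (\<alpha> ^ n) ^ i * inverse ((\<alpha> ^ n) ^ j)"
      unfolding z_def by (simp add: power_mult_distrib power_inverse flip: power_mult) (simp add: mult.commute)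
    then have "z ^ n = 1" using root by simp
    moreover have "z \<noteq> 1"
    proof
      assume "z = 1"
      then have "\<alpha> ^ i = \<alpha> ^ j" unfolding z_def using alpha_nonzero by (simp add: power_inverse field_simps)
      with inj_on_power assms False show False by (auto dest: inj_onD)
    qed
    ultimately show ?thesis using geometric_sum[of z n] False unfolding terms by simp
  qed
qed

lemma dft_inversion:
  assumes "j < n"
  shows "(\<Sum>k<n. (\<Sum>i<n. y i * (\<alpha> ^ k) ^ i) * (inverse \<alpha> ^ k) ^ j) = of_nat n * y j"
proof -
  have "(\<Sum>k<n. (\<Sum>i<n. y i * (\<alpha> ^ k) ^ i) * (inverse \<alpha> ^ k) ^ j)
      = (\<Sum>k<n. \<Sum>i<n. y i * ((\<alpha> ^ k) ^ i * (inverse \<alpha> ^ k) ^ j))"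
    by (simp add: sum_distrib_right mult.assoc)
  also have "\<dots> = (\<Sum>i<n. \<Sum>k<n. y i * ((\<alpha> ^ k) ^ i * (inverse \<alpha> ^ k) ^ j))"
    by (rule sum.swap)
  also have "\<dots> = (\<Sum>i<n. y i * (\<Sum>k<n. (\<alpha> ^ k) ^ i * (inverse \<alpha> ^ k) ^ j))"
    by (simp add: sum_distrib_left)
  also have "\<dots> = (\<Sum>i<n. if i = j then of_nat n * y j else 0)"
    using assms by (intro sum.cong) (auto simp: sum_power_orthogonal)
  also have "\<dots> = of_nat n * y j" using assms by simp
  finally show ?thesis .
qed

lemma dft_eq_zero:
  assumes "\<And>k. k < n \<Longrightarrow> (\<Sum>i<n. y i * (\<alpha> ^ k) ^ i) = 0" "j < n"
  shows "y j = 0"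
  using dft_inversion[OF assms(2), of y] assms(1) n_nonzero by simp

end

section \<open>Cyclic codes as zero sets\<close>

definition eval_word :: "('f::comm_ring_1 \<Rightarrow> 'e::comm_ring_1) \<Rightarrow> nat \<Rightarrow> (nat \<Rightarrow> 'f) \<Rightarrow> 'e \<Rightarrow> 'e" where
  "eval_word emb n v \<omega> = (\<Sum>i<n. emb (v i) * \<omega> ^ i)"

context field_hom
begin

interpretation map_poly_hom: map_poly_idom_hom hom ..

lemma eval_word_eq_poly: "eval_word hom n v \<omega> = poly (map_poly hom (vec_poly n v)) \<omega>"
  unfolding vec_poly_def eval_word_def
  by (simp add: map_poly_hom.hom_sum poly_sum poly_monom)

lemma eval_word_diff:
  "eval_word hom n (\<lambda>i. x i - y i) \<omega> = eval_word hom n x \<omega> - eval_word hom n y \<omega>"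
  unfolding eval_word_def by (simp add: hom_minus left_diff_distrib sum_subtractf)

lemma poly_map_poly_mod_cyclic:
  assumes "\<omega> ^ n = 1"
  shows "poly (map_poly hom (p mod (monom 1 n - 1))) \<omega> = poly (map_poly hom p) \<omega>"
proof -
  let ?M = "monom 1 n - 1"
  have "poly (map_poly hom ?M) \<omega> = 0" using assms by (simp add: map_poly_hom.hom_minus poly_monom)
  have "poly (map_poly hom p) \<omega> = poly (map_poly hom (p div ?M * ?M + p mod ?M)) \<omega>"
    by (simp only: div_mult_mod_eq)
  also have "\<dots> = poly (map_poly hom (p mod ?M)) \<omega>"
    using \<open>poly (map_poly hom ?M) \<omega> = 0\<close>
    by (simp add: map_poly_hom.hom_add map_poly_hom.hom_mult)
  finally show ?thesis by simp
qed

lemma cyclic_code_vanishes: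
  assumes "v \<in> cyclic_code hom n Z" "finite Z" "\<beta> \<in> Z" "\<beta> ^ n = 1"
  shows "eval_word hom n v \<beta> = 0"
proof -
  obtain g h where g: "map_poly hom g = (\<Prod>\<beta>\<in>Z. [:-\<beta>, 1:])"
    and v: "vec_poly n v = (h * g) mod (monom 1 n - 1)"
    using assms(1) unfolding cyclic_code_def by blast
  have "eval_word hom n v \<beta> = poly (map_poly hom (h * g)) \<beta>"
    unfolding eval_word_eq_poly v using assms(4) by (rule poly_map_poly_mod_cyclic)
  also have "\<dots> = 0"
    using assms(2,3) by (simp add: map_poly_hom.hom_mult g poly_prod)
  finally show ?thesis .
qed

lemma cyclic_code_eq:
  assumes "finite Z" "\<forall>\<beta>\<in>Z. \<beta> ^ n = 1" "0 < n"
    and g: "map_poly hom g = (\<Prod>\<beta>\<in>Z. [:-\<beta>, 1:])"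
  shows "cyclic_code hom n Z = {v \<in> vecs n. \<forall>\<beta>\<in>Z. eval_word hom n v \<beta> = 0}"
proof (intro equalityI subsetI CollectI conjI ballI)
  fix v assume v: "v \<in> cyclic_code hom n Z"
  then show "v \<in> vecs n" unfolding cyclic_code_def by blast
  show "eval_word hom n v \<beta> = 0" if "\<beta> \<in> Z" for \<beta>
    using cyclic_code_vanishes[OF v assms(1) that] assms(2) that by blast
next
  fix v assume "v \<in> {v \<in> vecs n. \<forall>\<beta>\<in>Z. eval_word hom n v \<beta> = 0}"
  then have v: "v \<in> vecs n" "\<forall>\<beta>\<in>Z. poly (map_poly hom (vec_poly n v)) \<beta> = 0"
    by (simp_all add: eval_word_eq_poly)
  have "map_poly hom g dvd map_poly hom (vec_poly n v)"
    unfolding g using assms(1) v(2) by (rule prod_linear_factors_dvd)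
  then have "g dvd vec_poly n v" by (rule dvd_map_poly_hom_imp_dvd)
  moreover have "vec_poly n v mod (monom 1 n - 1) = vec_poly n v"
    using assms(3) by (intro mod_poly_less) (simp add: degree_monom_minus_one degree_vec_poly_less)
  ultimately have "vec_poly n v = (vec_poly n v div g * g) mod (monom 1 n - 1)" by simp
  with v(1) g show "v \<in> cyclic_code hom n Z" unfolding cyclic_code_def by blast
qed

lemma eval_word_rotate_word:
  assumes "\<delta> ^ n = 1" "s < n"
  shows "eval_word hom n (rotate_word n s w) \<delta> = \<delta> ^ (n - s) * eval_word hom n w \<delta>"
proof -
  have "eval_word hom n (rotate_word n s w) \<delta> = (\<Sum>j<n. hom (w ((j + s) mod n)) * \<delta> ^ j)"
    unfolding eval_word_def rotate_word_def by simp
  also have "\<dots> = (\<Sum>j<n. hom (w ((j + s) mod n)) * (\<delta> ^ ((j + s) mod n) * \<delta> ^ (n - s)))"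
  proof (intro sum.cong refl)
    fix j
    have "\<delta> ^ ((j + s) mod n) * \<delta> ^ (n - s) = \<delta> ^ (j + n)"
      using assms by (simp add: power_mod_eq flip: power_add)
    then show "hom (w ((j + s) mod n)) * \<delta> ^ j = hom (w ((j + s) mod n)) * (\<delta> ^ ((j + s) mod n) * \<delta> ^ (n - s))"
      using assms(1) by (simp add: power_add)
  qed
  also have "\<dots> = (\<Sum>i<n. hom (w i) * (\<delta> ^ i * \<delta> ^ (n - s)))"
    using sum.reindex_bij_betw[OF bij_betw_add_mod[OF assms(2)], of "\<lambda>i. hom (w i) * (\<delta> ^ i * \<delta> ^ (n - s))"] .
  also have "\<dots> = \<delta> ^ (n - s) * eval_word hom n w \<delta>"
    unfolding eval_word_def sum_distrib_left by (simp add: mult_ac)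
  finally show ?thesis .
qed

end

section \<open>Locality of the product code\<close>

locale cyclic_code_setting = field_hom emb + primitive_root \<alpha> n
  for emb :: "'f::field \<Rightarrow> 'e::field" and \<alpha> :: 'e and n :: nat
begin

interpretation map_poly_hom: map_poly_idom_hom emb ..

lemma eval_word_pointwise_mult:
  "eval_word emb n (\<lambda>i. x i * c i) \<gamma>
     = (\<Sum>k<n. eval_word emb n c (\<alpha> ^ k) * eval_word emb n x (\<gamma> * inverse \<alpha> ^ k)) / of_nat n"
proof -
  define E where "E k = eval_word emb n c (\<alpha> ^ k)" for k
  have c: "emb (c i) = (\<Sum>k<n. E k * (inverse \<alpha> ^ k) ^ i) / of_nat n" if "i < n" for i
    using dft_inversion[OF that, of "\<lambda>i. emb (c i)"] n_nonzero
    unfolding E_def eval_word_def by (simp add: field_simps)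
  have "eval_word emb n (\<lambda>i. x i * c i) \<gamma> = (\<Sum>i<n. emb (x i) * \<gamma> ^ i * emb (c i))"
    unfolding eval_word_def by (simp add: hom_mult mult_ac)
  also have "\<dots> = (\<Sum>i<n. \<Sum>k<n. emb (x i) * \<gamma> ^ i * (E k * (inverse \<alpha> ^ k) ^ i)) / of_nat n"
    by (simp add: c sum_divide_distrib sum_distrib_left)
  also have "\<dots> = (\<Sum>k<n. \<Sum>i<n. emb (x i) * \<gamma> ^ i * (E k * (inverse \<alpha> ^ k) ^ i)) / of_nat n"
    by (subst sum.swap) (rule refl)
  also have "\<dots> = (\<Sum>k<n. E k * eval_word emb n x (\<gamma> * inverse \<alpha> ^ k)) / of_nat n"
    unfolding eval_word_def by (simp add: sum_distrib_left power_mult_distrib mult_ac)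
  finally show ?thesis unfolding E_def .
qed

text \<open>The words c s below are the codewords x^s g mod (x^n - 1) of C_A. Orthogonality of x
  to all of them is, by the convolution formula at 1, the vanishing of a Fourier transform.\<close>

lemma dual_code_vanishes:
  assumes A: "A \<subseteq> roots_set \<alpha> n"
    and g: "map_poly emb g = (\<Prod>\<beta>\<in>A. [:-\<beta>, 1:])"
    and x: "x \<in> dual_code n (cyclic_code emb n A)"
    and \<beta>: "\<beta> \<in> roots_set \<alpha> n - A"
  shows "eval_word emb n x (inverse \<beta>) = 0"
proof -
  let ?M = "monom 1 n - 1 :: 'f poly" and ?G = "\<Prod>\<beta>\<in>A. [:-\<beta>, 1:]"
  obtain k where k: "k < n" "\<beta> = \<alpha> ^ k" using \<beta> unfolding roots_set_def by blast
  define c where "c s = coeff ((monom 1 s * g) mod ?M)" for s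
  have deg: "degree ((monom 1 s * g) mod ?M) < n" for s
    by (rule degree_mod_monom_minus_one[OF n_pos])
  have c_code: "c s \<in> cyclic_code emb n A" for s
  proof -
    have "c s \<in> vecs n" unfolding c_def vecs_def using deg[of s] by (auto simp: coeff_eq_0)
    moreover have "vec_poly n (c s) = (monom 1 s * g) mod ?M"
      unfolding c_def by (rule vec_poly_coeff[OF deg])
    ultimately show ?thesis unfolding cyclic_code_def using g by blast
  qed
  have eval_c: "eval_word emb n (c s) (\<alpha> ^ j) = (\<alpha> ^ j) ^ s * poly ?G (\<alpha> ^ j)" for s j
  proof -
    from root_power have "eval_word emb n (c s) (\<alpha> ^ j) = poly (map_poly emb (monom 1 s * g)) (\<alpha> ^ j)"
      unfolding eval_word_eq_poly c_def vec_poly_coeff[OF deg] by (rule poly_map_poly_mod_cyclic)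
    then show ?thesis by (simp add: map_poly_hom.hom_mult g poly_monom)
  qed
  define Y where "Y j = poly ?G (\<alpha> ^ j) * eval_word emb n x (inverse \<alpha> ^ j)" for j
  have "(\<Sum>j<n. Y j * (\<alpha> ^ s) ^ j) = 0" if "s < n" for s
  proof -
    have "emb (\<Sum>i<n. x i * c s i) = 0" using x c_code unfolding dual_code_def by simp
    then have "eval_word emb n (\<lambda>i. x i * c s i) 1 = 0" unfolding eval_word_def by (simp add: hom_sum)
    then have "(\<Sum>j<n. eval_word emb n (c s) (\<alpha> ^ j) * eval_word emb n x (inverse \<alpha> ^ j)) = 0"
      unfolding eval_word_pointwise_mult using n_nonzero by simp
    then show ?thesis
      unfolding eval_c Y_def by (simp add: mult_ac flip: power_mult)
  qed
  then have "Y k = 0" using dft_eq_zero k(1) by blast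
  moreover have "poly ?G (\<alpha> ^ k) \<noteq> 0"
    using \<beta> k finite_subset[OF A finite_roots_set] by (auto simp: poly_prod)
  ultimately show ?thesis unfolding Y_def k(2) by (simp add: power_inverse)
qed

lemma set_prod_word_vanishes:
  assumes x: "\<forall>\<beta>\<in>roots_set \<alpha> n - A. eval_word emb n x (inverse \<beta>) = 0"
    and c: "\<forall>\<beta>\<in>set_prod A B. eval_word emb n c \<beta> = 0"
    and \<gamma>: "\<gamma> \<in> B" "B \<subseteq> roots_set \<alpha> n"
  shows "eval_word emb n (\<lambda>i. x i * c i) \<gamma> = 0"
proof -
  \<comment> \<open>Either \<alpha>^k lies in AB, or \<gamma> \<alpha>^-k is the inverse of a root outside A.\<close>
  have terms: "eval_word emb n c (\<alpha> ^ k) * eval_word emb n x (\<gamma> * inverse \<alpha> ^ k) = 0" for k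
  proof (cases "\<alpha> ^ k \<in> set_prod A B")
    case True
    then show ?thesis using c by simp
  next
    case False
    have "\<gamma> ^ n = 1" using \<gamma> roots_set_eq by blast
    then have "\<gamma> \<noteq> 0" using n_pos by (auto simp: zero_power)
    define \<beta> where "\<beta> = \<alpha> ^ k * inverse \<gamma>"
    have "\<beta> ^ n = 1"
      unfolding \<beta>_def using root_power \<open>\<gamma> ^ n = 1\<close> by (simp add: power_mult_distrib power_inverse)
    moreover have "\<beta> \<notin> A"
    proof
      assume "\<beta> \<in> A"
      moreover have "\<alpha> ^ k = \<beta> * \<gamma>" unfolding \<beta>_def using \<open>\<gamma> \<noteq> 0\<close> by simp
      ultimately have "\<alpha> ^ k \<in> set_prod A B" using \<gamma> unfolding set_prod_def by blast
      with False show False ..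
    qed
    ultimately have "eval_word emb n x (inverse \<beta>) = 0" using x roots_set_eq by blast
    moreover have "inverse \<beta> = \<gamma> * inverse \<alpha> ^ k"
      unfolding \<beta>_def using \<open>\<gamma> \<noteq> 0\<close> by (simp add: power_inverse mult.commute)
    ultimately show ?thesis by simp
  qed
  have "(\<Sum>k<n. eval_word emb n c (\<alpha> ^ k) * eval_word emb n x (\<gamma> * inverse \<alpha> ^ k)) = 0"
    by (rule sum.neutral) (use terms in blast)
  then show ?thesis unfolding eval_word_pointwise_mult by simp
qed

lemma min_dist_puncture_set_prod:
  assumes A: "A \<subseteq> roots_set \<alpha> n" and B: "B \<subseteq> roots_set \<alpha> n"
    and g: "map_poly emb g = (\<Prod>\<beta>\<in>B. [:-\<beta>, 1:])"
    and x: "\<forall>\<beta>\<in>roots_set \<alpha> n - A. eval_word emb n x (inverse \<beta>) = 0"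
    and dist: "enat d \<le> min_dist n (cyclic_code emb n B)"
  shows "enat d \<le> min_dist n (puncture (cyclic_code emb n (set_prod A B)) (word_support n x))"
proof (rule min_dist_puncture_word_support[OF _ _ dist])
  have AB: "set_prod A B \<subseteq> roots_set \<alpha> n" using set_prod_roots_set[OF A B] .
  have C_B: "cyclic_code emb n B = {v \<in> vecs n. \<forall>\<beta>\<in>B. eval_word emb n v \<beta> = 0}"
    using finite_subset[OF B finite_roots_set] B roots_set_eq n_pos g by (intro cyclic_code_eq) auto
  show "(\<lambda>_. 0) \<in> cyclic_code emb n B" unfolding C_B by (simp add: vecs_def eval_word_def)
  fix c c' assume cc': "c \<in> cyclic_code emb n (set_prod A B)" "c' \<in> cyclic_code emb n (set_prod A B)"
  have "eval_word emb n v \<beta> = 0" if "v \<in> cyclic_code emb n (set_prod A B)" "\<beta> \<in> set_prod A B" for v \<beta>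
    using cyclic_code_vanishes[OF that(1) finite_subset[OF AB finite_roots_set] that(2)] that(2) AB roots_set_eq
    by blast
  with cc' have "\<forall>\<beta>\<in>set_prod A B. eval_word emb n (\<lambda>i. c i - c' i) \<beta> = 0"
    by (simp add: eval_word_diff)
  moreover have "(\<lambda>i. x i * (c i - c' i)) \<in> vecs n"
    using cc' unfolding cyclic_code_def vecs_def by auto
  ultimately show "(\<lambda>i. x i * (c i - c' i)) \<in> cyclic_code emb n B"
    unfolding C_B using set_prod_word_vanishes[OF x _ _ B] by blast
qed

lemma min_weight_dual_word:
  assumes A: "A \<subseteq> roots_set \<alpha> n"
    and g: "map_poly emb g = (\<Prod>\<beta>\<in>A. [:-\<beta>, 1:])"
    and dist: "min_dist n (dual_code n (cyclic_code emb n A)) = enat d"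
  obtains w where "card (word_support n w) = d"
    "\<forall>\<beta>\<in>roots_set \<alpha> n - A. eval_word emb n w (inverse \<beta>) = 0"
proof -
  obtain x y where x: "x \<in> dual_code n (cyclic_code emb n A)" and y: "y \<in> dual_code n (cyclic_code emb n A)"
    and "hamming n x y = d"
    using min_dist_attained[OF dist] by blast
  show thesis
  proof
    show "card (word_support n (\<lambda>i. x i - y i)) = d"
      using \<open>hamming n x y = d\<close> by (simp add: hamming_eq_card_word_support)
    show "\<forall>\<beta>\<in>roots_set \<alpha> n - A. eval_word emb n (\<lambda>i. x i - y i) (inverse \<beta>) = 0"
      using dual_code_vanishes[OF A g x] dual_code_vanishes[OF A g y] by (simp add: eval_word_diff)
  qed
qed

lemma cyclic_code_nonempty_generator:
  assumes "cyclic_code emb n Z \<noteq> {}"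
  obtains g where "map_poly emb g = (\<Prod>\<beta>\<in>Z. [:-\<beta>, 1:])"
  using assms unfolding cyclic_code_def by blast

lemma cyclic_code_set_prod_locality:
  assumes A: "A \<subseteq> roots_set \<alpha> n" and B: "B \<subseteq> roots_set \<alpha> n"
    and dA: "min_dist n (dual_code n (cyclic_code emb n A)) = enat dA"
    and dB: "min_dist n (cyclic_code emb n B) = enat dB"
    and "dB < dA"
  shows "has_locality n (cyclic_code emb n (set_prod A B)) (dA - dB + 1) dB"
proof -
  have "cyclic_code emb n B \<noteq> {}" using dB by (auto simp: min_dist_empty)
  then obtain gB where gB: "map_poly emb gB = (\<Prod>\<beta>\<in>B. [:-\<beta>, 1:])"
    by (rule cyclic_code_nonempty_generator)
  \<comment> \<open>C_A is empty when the generator is not defined over the base field; then its dual is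
    the whole space, of distance 1.\<close>
  have "cyclic_code emb n A \<noteq> {}"
  proof
    assume "cyclic_code emb n A = {}"
    then have "dual_code n (cyclic_code emb n A) = vecs n" unfolding dual_code_def by simp
    with dA min_dist_vecs[OF n_pos, where 'a='f] have "dA = 1" by (simp add: one_enat_def)
    moreover have "1 \<le> dB"
      using one_le_min_dist[of "cyclic_code emb n B" n] dB unfolding cyclic_code_def
      by (auto simp: one_enat_def)
    ultimately show False using \<open>dB < dA\<close> by simp
  qed
  then obtain gA where gA: "map_poly emb gA = (\<Prod>\<beta>\<in>A. [:-\<beta>, 1:])"
    by (rule cyclic_code_nonempty_generator)
  obtain w where w: "card (word_support n w) = dA"
    "\<forall>\<beta>\<in>roots_set \<alpha> n - A. eval_word emb n w (inverse \<beta>) = 0"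
    using min_weight_dual_word[OF A gA dA] by blast
  then obtain t where t: "t \<in> word_support n w"
    using \<open>dB < dA\<close> by (metis card.empty ex_in_conv less_nat_zero_code)
  show ?thesis unfolding has_locality_def
  proof (intro allI impI)
    fix i assume "i < n"
    define s where "s = (t + n - i) mod n"
    define x where "x = rotate_word n s w"
    have "s < n" unfolding s_def using n_pos by simp
    have "i \<in> word_support n x"
    proof -
      have "t < n" using t unfolding word_support_def by simp
      then have "(i + (t + n - i) mod n) mod n = t"
        using \<open>i < n\<close> by (simp add: mod_add_right_eq)
      then show ?thesis using t \<open>i < n\<close> unfolding x_def s_def rotate_word_def word_support_def by simp
    qed
    moreover have "card (word_support n x) = dA"
      unfolding x_def using card_word_support_rotate_word[OF \<open>s < n\<close>, of w] w(1) by (rule trans)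
    moreover have "\<forall>\<beta>\<in>roots_set \<alpha> n - A. eval_word emb n x (inverse \<beta>) = 0"
    proof
      fix \<beta> assume "\<beta> \<in> roots_set \<alpha> n - A"
      moreover then have "inverse \<beta> ^ n = 1" using roots_set_eq by (simp add: power_inverse)
      ultimately show "eval_word emb n x (inverse \<beta>) = 0"
        unfolding x_def using eval_word_rotate_word[OF _ \<open>s < n\<close>] w(2) by simp
    qed
    then have "enat dB \<le> min_dist n (puncture (cyclic_code emb n (set_prod A B)) (word_support n x))"
      using min_dist_puncture_set_prod[OF A B gB] dB by simp
    ultimately show "\<exists>S\<subseteq>{..<n}. i \<in> S \<and> card S \<le> dA - dB + 1 + dB - 1
        \<and> enat dB \<le> min_dist n (puncture (cyclic_code emb n (set_prod A B)) S)"
      using \<open>dB < dA\<close> by (intro exI[of _ "word_support n x"]) (auto simp: word_support_def)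
  qed
qed

end

lemma cyclotomic_union_set_prod:
  assumes root: "\<alpha> ^ n = 1"
    and A: "A \<subseteq> roots_set \<alpha> n" "cyclotomic_union q n (exps \<alpha> n A)"
    and B: "B \<subseteq> roots_set \<alpha> n" "cyclotomic_union q n (exps \<alpha> n B)"
  shows "cyclotomic_union q n (exps \<alpha> n (set_prod A B))"
  unfolding cyclotomic_union_def
proof (intro conjI ballI)
  show "exps \<alpha> n (set_prod A B) \<subseteq> {..<n}" unfolding exps_def by auto
next
  have power_mod: "\<alpha> ^ (m mod n) = \<alpha> ^ m" for m by (rule power_mod_eq[OF root])
  have power_q_mem: "\<alpha> ^ (q * a) \<in> Z"
    if "Z \<subseteq> roots_set \<alpha> n" "cyclotomic_union q n (exps \<alpha> n Z)" "\<alpha> ^ a \<in> Z" "a < n" for Z a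
  proof -
    have "a \<in> exps \<alpha> n Z" using that unfolding exps_def by simp
    then have "(q * a) mod n \<in> exps \<alpha> n Z" using that(2) unfolding cyclotomic_union_def by blast
    then show ?thesis by (simp add: exps_def power_mod)
  qed
  fix j assume "j \<in> exps \<alpha> n (set_prod A B)"
  then obtain \<beta> \<gamma> where j: "j < n" "\<alpha> ^ j = \<beta> * \<gamma>" "\<beta> \<in> A" "\<gamma> \<in> B"
    unfolding exps_def set_prod_def by blast
  obtain a b where "a < n" "\<beta> = \<alpha> ^ a" "b < n" "\<gamma> = \<alpha> ^ b"
    using j(3,4) A(1) B(1) unfolding roots_set_def by blast
  with j power_q_mem A B have "\<alpha> ^ (q * a) \<in> A" "\<alpha> ^ (q * b) \<in> B" by auto
  moreover have "\<alpha> ^ ((q * j) mod n) = \<alpha> ^ (q * a) * \<alpha> ^ (q * b)"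
    using j(2) \<open>\<beta> = \<alpha> ^ a\<close> \<open>\<gamma> = \<alpha> ^ b\<close>
    by (simp add: power_mod power_mult_distrib mult.commute[of q] power_mult)
  ultimately show "(q * j) mod n \<in> exps \<alpha> n (set_prod A B)"
    unfolding exps_def set_prod_def using j(1) by auto
qed

lemma of_nat_ne_zero_if_coprime_card:
  fixes emb :: "'f::{finite,field} \<Rightarrow> 'e::field"
  assumes "field_hom emb" "coprime n (card (UNIV :: 'f set))"
  shows "of_nat n \<noteq> (0 :: 'e)"
proof
  interpret field_hom emb by (rule assms(1))
  assume "of_nat n = (0 :: 'e)"
  then have "(of_nat n :: 'f) = 0" by (simp flip: hom_of_nat)
  then have "CHAR('f) dvd n" by (simp add: of_nat_eq_0_iff_char_dvd)
  moreover have "CHAR('f) dvd card (UNIV :: 'f set)" by (rule CHAR_dvd_CARD)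
  ultimately have "CHAR('f) = 1" using assms(2) coprime_common_divisor_nat by blast
  then show False using of_nat_CHAR[where 'a='f] by simp
qed

theorem corollary3p5:
  fixes emb :: "'f::{finite,field} \<Rightarrow> 'e::{finite,field}"
    and q n :: nat and \<alpha> :: 'e and A B :: "'e set" and dA dB :: nat
  assumes q_def: "q = card (UNIV :: 'f set)"
    and n_pos: "0 < n"
    and cop: "coprime n q"
    and ext: "card (UNIV :: 'e set) = q ^ ord n q"
    and emb: "field_embedding emb"
    and prim: "\<alpha> ^ n = 1" "\<forall>k. 0 < k \<and> k < n \<longrightarrow> \<alpha> ^ k \<noteq> 1"
    and A_sub: "A \<subseteq> roots_set \<alpha> n" and B_sub: "B \<subseteq> roots_set \<alpha> n"
    and A_cyc: "cyclotomic_union q n (exps \<alpha> n A)"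
    and B_cyc: "cyclotomic_union q n (exps \<alpha> n B)"
    and dA: "min_dist n (dual_code n (cyclic_code emb n A)) = enat dA"
    and dB: "min_dist n (cyclic_code emb n B) = enat dB"
    and gt: "dA > dB"
  shows "cyclotomic_union q n (exps \<alpha> n (set_prod A B))
    \<and> has_locality n (cyclic_code emb n (set_prod A B)) (dA - dB + 1) dB"
proof
  \<comment> \<open>q_def and cop only make n invertible in the extension field.\<close>
  show "cyclotomic_union q n (exps \<alpha> n (set_prod A B))"
    using cyclotomic_union_set_prod[OF prim(1) A_sub A_cyc B_sub B_cyc] .
  have hom: "field_hom emb" using emb by (rule field_embedding_imp_field_hom)
  interpret cyclic_code_setting emb \<alpha> n
  proof (intro cyclic_code_setting.intro hom primitive_root.intro prim(1))
    show "\<alpha> ^ k \<noteq> 1" if "0 < k" "k < n" for k using prim(2) that by blast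
    show "of_nat n \<noteq> (0 :: 'e)"
      using of_nat_ne_zero_if_coprime_card[OF hom] cop q_def by blast
  qed
  show "has_locality n (cyclic_code emb n (set_prod A B)) (dA - dB + 1) dB"
    using cyclic_code_set_prod_locality[OF A_sub B_sub dA dB gt] .
qed

end
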